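(* Let $\mathcal G$ be a network, $h\in\mathbb R^{\mathcal V}$ and $a\in\{\pm1\}$. The coordination game on $\mathcal G$ with external field $h$ has $a\mathbf 1$ as its unique equilibrium if and only if both: (a) $w\ngeq a h$; and (b) every nonempty subset $\mathcal R\subseteq\mathcal V\setminus\mathcal S_a(h)$ contains some node $i$ with $w_i^{\mathcal R}<w_i^{\mathcal V\setminus\mathcal R}+a h_i$.
   Context: A network is $\mathcal G=(\mathcal V,\mathcal E,W)$ with finite node set $\mathcal V$, links $\mathcal E\subseteq\mathcal V\times\mathcal V$, weight matrix $W\in\mathbb R_+^{\mathcal V\times\mathcal V}$ with zero diagonal, $W_{ij}>0$ iff $(i,j)\in\mathcal E$; for $\mathcal S\subseteq\mathcal V$, $w_i^{\mathcal S}=\sum_{j\in\mathcal S}W_{ij}$; $w=W\mathbf 1$. $\mathcal X=\{-1,+1\}^{\mathcal V}$. $x\ngeq y$ means $x_i<y_i$ for some $i$. $\mathcal S_a(h)=\{i\in\mathcal V: a h_i>w_i\}$. Coordination game on $\mathcal G$ with external field $h$: players $\mathcal V$, actions $\{\pm1\}$, utilities $u_i(x)=x_i(\sum_jW_{ij}x_j+h_i)$; $x^*$ is an equilibrium if for every $i$, $x_i^*$ maximizes $u_i(\cdot,x^*_{-i})$ over $\{\pm1\}$. *)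

theory Defs
  imports Complex_Main
begin

definition network :: "('v::finite \<Rightarrow> 'v \<Rightarrow> real) \<Rightarrow> bool" where
  "network W \<longleftrightarrow> (\<forall>i j. 0 \<le> W i j) \<and> (\<forall>i. W i i = 0)"

definition links :: "('v \<Rightarrow> 'v \<Rightarrow> real) \<Rightarrow> ('v \<times> 'v) set" where
  "links W = {(i,j). W i j > 0}"

definition wS :: "('v::finite \<Rightarrow> 'v \<Rightarrow> real) \<Rightarrow> 'v set \<Rightarrow> 'v \<Rightarrow> real" where
  "wS W S i = (\<Sum>j\<in>S. W i j)"

definition wdeg :: "('v::finite \<Rightarrow> 'v \<Rightarrow> real) \<Rightarrow> 'v \<Rightarrow> real" where
  "wdeg W i = (\<Sum>j\<in>UNIV. W i j)"

definition Sa :: "('v::finite \<Rightarrow> 'v \<Rightarrow> real) \<Rightarrow> real \<Rightarrow> ('v \<Rightarrow> real) \<Rightarrow> 'v set" where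
  "Sa W a h = {i. a * h i > wdeg W i}"

definition config :: "('v \<Rightarrow> real) \<Rightarrow> bool" where
  "config x \<longleftrightarrow> (\<forall>i. x i = -1 \<or> x i = 1)"

definition utility :: "('v::finite \<Rightarrow> 'v \<Rightarrow> real) \<Rightarrow> ('v \<Rightarrow> real) \<Rightarrow> ('v \<Rightarrow> real) \<Rightarrow> 'v \<Rightarrow> real" where
  "utility W h x i = x i * ((\<Sum>j\<in>UNIV. W i j * x j) + h i)"

definition equilibrium :: "('v::finite \<Rightarrow> 'v \<Rightarrow> real) \<Rightarrow> ('v \<Rightarrow> real) \<Rightarrow> ('v \<Rightarrow> real) \<Rightarrow> bool" where
  "equilibrium W h x \<longleftrightarrow> config x \<and>
     (\<forall>i. \<forall>s\<in>{-1, 1}. utility W h (x(i := s)) i \<le> utility W h x i)"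

definition unique_equilibrium :: "('v::finite \<Rightarrow> 'v \<Rightarrow> real) \<Rightarrow> ('v \<Rightarrow> real) \<Rightarrow> ('v \<Rightarrow> real) \<Rightarrow> bool" where
  "unique_equilibrium W h x \<longleftrightarrow> equilibrium W h x \<and> (\<forall>y. equilibrium W h y \<longrightarrow> y = x)"

end

theory Submission
  imports Defs
begin

text \<open>Every profile is \<open>a\<close> off some set \<open>R\<close> of nodes and \<open>-a\<close> on it; it is an equilibrium
  iff \<open>R\<close> is cohesive (each node of \<open>R\<close> has at least as much incentive, weight plus field,
  towards \<open>-a\<close> as towards \<open>a\<close>) and no node outside \<open>R\<close> wants to switch. Adding an unstable
  outside node keeps a set cohesive, so every cohesive set grows into an equilibrium. Hence
  \<open>a\<one>\<close> is the unique equilibrium iff no nonempty set is cohesive. A cohesive set avoids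
  \<open>S\<^sub>a(h)\<close>, so this is condition (b); condition (a) is the case \<open>R = \<V>\<close> and follows from (b).\<close>

definition flip_on :: "'v set \<Rightarrow> real \<Rightarrow> 'v \<Rightarrow> real" where
  "flip_on R a = (\<lambda>i. if i \<in> R then -a else a)"

definition cohesive :: "('v::finite \<Rightarrow> 'v \<Rightarrow> real) \<Rightarrow> ('v \<Rightarrow> real) \<Rightarrow> real \<Rightarrow> 'v set \<Rightarrow> bool" where
  "cohesive W h a R \<longleftrightarrow> (\<forall>i\<in>R. wS W (UNIV - R) i + a * h i \<le> wS W R i)"

lemma wS_mono:
  assumes "network W" "R \<subseteq> R'"
  shows "wS W R i \<le> wS W R' i"
  unfolding wS_def using assms by (intro sum_mono2) (auto simp: network_def)

lemma wS_add_wS_compl: "wS W R i + wS W (UNIV - R) i = wdeg W i"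
  unfolding wS_def wdeg_def by (metis Int_UNIV_left finite sum.Int_Diff)

lemma wS_insert_self:
  assumes "W j j = 0"
  shows "wS W (insert j R) j = wS W R j"
  unfolding wS_def using assms by (cases "j \<in> R") (simp_all add: insert_absorb)

lemma sum_weighted_flip_on:
  fixes W :: "'v::finite \<Rightarrow> 'v \<Rightarrow> real"
  shows "(\<Sum>j\<in>UNIV. W i j * flip_on R a j) = a * (wS W (UNIV - R) i - wS W R i)"
proof -
  have "(\<Sum>j\<in>UNIV. W i j * flip_on R a j)
        = (\<Sum>j\<in>UNIV \<inter> R. W i j * flip_on R a j) + (\<Sum>j\<in>UNIV - R. W i j * flip_on R a j)"
    by (rule sum.Int_Diff) simp
  also have "\<dots> = (\<Sum>j\<in>R. - a * W i j) + (\<Sum>j\<in>UNIV - R. a * W i j)"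
    by (auto intro!: sum.cong arg_cong2[where f = "(+)"] simp: flip_on_def)
  finally show ?thesis by (simp add: wS_def sum_distrib_left algebra_simps sum_negf)
qed

lemma config_eq_flip_on:
  assumes "config y" "a = -1 \<or> a = 1"
  shows "y = flip_on {i. y i = -a} a"
  using assms unfolding config_def flip_on_def by (auto intro!: ext)

lemma best_response_iff_sign:
  assumes "config y"
  shows "(\<forall>i. \<forall>s\<in>{-1, 1}. s * F i \<le> y i * F i) \<longleftrightarrow> (\<forall>i. 0 \<le> y i * F i)"
proof -
  have "(\<forall>s\<in>{-1, 1}. s * F i \<le> y i * F i) \<longleftrightarrow> 0 \<le> y i * F i" for i
  proof -
    have "y i = -1 \<or> y i = 1"
      using assms by (simp add: config_def)
    then show ?thesis
      by (elim disjE) auto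
  qed
  then show ?thesis
    by simp
qed

lemma equilibrium_iff_best_response:
  assumes diag: "\<And>i. W i i = 0"
  shows "equilibrium W h y \<longleftrightarrow> config y \<and> (\<forall>i. 0 \<le> y i * ((\<Sum>j\<in>UNIV. W i j * y j) + h i))"
proof -
  have deviation: "utility W h (y(i := s)) i = s * ((\<Sum>j\<in>UNIV. W i j * y j) + h i)" for i s
  proof -
    have "(\<Sum>j\<in>UNIV. W i j * (y(i := s)) j) = (\<Sum>j\<in>UNIV. W i j * y j)"
      using diag by (intro sum.cong) auto
    then show ?thesis by (simp add: utility_def)
  qed
  show ?thesis
    unfolding equilibrium_def deviation unfolding utility_def
    using best_response_iff_sign[of y "\<lambda>i. (\<Sum>j\<in>UNIV. W i j * y j) + h i"] by blast
qed

lemma equilibrium_flip_on_iff: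
  assumes "network W" "a = -1 \<or> a = 1"
  shows "equilibrium W h (flip_on R a) \<longleftrightarrow>
           cohesive W h a R \<and> (\<forall>i. i \<notin> R \<longrightarrow> wS W R i \<le> wS W (UNIV - R) i + a * h i)"
proof -
  have diag: "\<And>i. W i i = 0"
    using assms(1) by (simp add: network_def)
  have "config (flip_on R a)"
    using assms(2) by (auto simp: config_def flip_on_def)
  moreover have "0 \<le> flip_on R a i * ((\<Sum>j\<in>UNIV. W i j * flip_on R a j) + h i) \<longleftrightarrow>
     (if i \<in> R then wS W (UNIV - R) i + a * h i \<le> wS W R i
      else wS W R i \<le> wS W (UNIV - R) i + a * h i)" for i
    using assms(2) unfolding sum_weighted_flip_on
    by (elim disjE) (auto simp: flip_on_def algebra_simps)
  ultimately show ?thesis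
    unfolding equilibrium_iff_best_response[OF diag] cohesive_def by (auto split: if_splits)
qed

lemma cohesive_insert:
  assumes "network W" "cohesive W h a R" "j \<notin> R"
    and unstable: "wS W (UNIV - R) j + a * h j < wS W R j"
  shows "cohesive W h a (insert j R)"
  unfolding cohesive_def
proof
  fix i assume i: "i \<in> insert j R"
  have diag: "W j j = 0"
    using assms(1) by (simp add: network_def)
  show "wS W (UNIV - insert j R) i + a * h i \<le> wS W (insert j R) i"
  proof (cases "i = j")
    case True
    have "UNIV - R = insert j (UNIV - insert j R)"
      using assms(3) by blast
    then have "wS W (UNIV - R) j = wS W (UNIV - insert j R) j"
      using wS_insert_self[of W j, OF diag] by metis
    then show ?thesis
      using True unstable wS_insert_self[of W j R, OF diag] by simp
  next
    case False
    then have "wS W (UNIV - R) i + a * h i \<le> wS W R i"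
      using assms(2) i by (simp add: cohesive_def)
    moreover have "wS W R i \<le> wS W (insert j R) i"
      by (rule wS_mono[OF assms(1)]) blast
    moreover have "wS W (UNIV - insert j R) i \<le> wS W (UNIV - R) i"
      by (rule wS_mono[OF assms(1)]) blast
    ultimately show ?thesis by linarith
  qed
qed

lemma cohesive_extends_to_equilibrium:
  assumes "network W" "a = -1 \<or> a = 1" "cohesive W h a R"
  shows "\<exists>S. R \<subseteq> S \<and> equilibrium W h (flip_on S a)"
  using assms(3)
proof (induction "card (UNIV - R)" arbitrary: R rule: less_induct)
  case less
  show ?case
  proof (cases "\<exists>j. j \<notin> R \<and> wS W (UNIV - R) j + a * h j < wS W R j")
    case True
    then obtain j where j: "j \<notin> R" "wS W (UNIV - R) j + a * h j < wS W R j"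
      by blast
    have "card (UNIV - insert j R) < card (UNIV - R)"
      using j(1) by (intro psubset_card_mono) auto
    with less.hyps cohesive_insert[OF assms(1) less.prems j] show ?thesis
      by (meson subset_insertI subset_trans)
  next
    case False
    then show ?thesis
      using less.prems equilibrium_flip_on_iff[OF assms(1,2)] by (auto simp: not_less)
  qed
qed

lemma unique_equilibrium_iff_no_cohesive:
  assumes "network W" "a = -1 \<or> a = 1"
  shows "unique_equilibrium W h (\<lambda>_. a) \<longleftrightarrow> (\<forall>R. R \<noteq> {} \<longrightarrow> \<not> cohesive W h a R)"
proof
  assume unique: "unique_equilibrium W h (\<lambda>_. a)"
  show "\<forall>R. R \<noteq> {} \<longrightarrow> \<not> cohesive W h a R"
  proof (intro allI impI notI)
    fix R assume "R \<noteq> {}" "cohesive W h a R"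
    then obtain S r where "r \<in> S" "equilibrium W h (flip_on S a)"
      using cohesive_extends_to_equilibrium[OF assms] by blast
    then have "flip_on S a r = a"
      using unique unfolding unique_equilibrium_def by metis
    with \<open>r \<in> S\<close> assms(2) show False
      by (auto simp: flip_on_def)
  qed
next
  assume none: "\<forall>R. R \<noteq> {} \<longrightarrow> \<not> cohesive W h a R"
  have flip_empty: "flip_on {} a = (\<lambda>_. a)"
    by (simp add: flip_on_def)
  have "equilibrium W h (flip_on {} a)"
  proof -
    have "wS W {} i \<le> wS W (UNIV - {}) i + a * h i" for i
    proof -
      have "wS W {i} i = 0"
        using assms(1) by (simp add: wS_def network_def)
      moreover have "\<not> cohesive W h a {i}"
        using none by blast
      ultimately have "0 < wS W (UNIV - {i}) i + a * h i"
        by (simp add: cohesive_def)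
      moreover have "wS W (UNIV - {i}) i \<le> wS W (UNIV - {}) i"
        by (rule wS_mono[OF assms(1)]) blast
      ultimately show ?thesis
        by (simp add: wS_def)
    qed
    then show ?thesis
      by (simp add: equilibrium_flip_on_iff[OF assms] cohesive_def)
  qed
  moreover have "y = (\<lambda>_. a)" if "equilibrium W h y" for y
  proof -
    define R where "R = {i. y i = -a}"
    have y: "y = flip_on R a"
      using that assms(2) config_eq_flip_on unfolding R_def equilibrium_def by blast
    then have "cohesive W h a R"
      using that equilibrium_flip_on_iff[OF assms] by simp
    then have "R = {}"
      using none by blast
    then show ?thesis
      using y flip_empty by simp
  qed
  ultimately show "unique_equilibrium W h (\<lambda>_. a)"
    unfolding unique_equilibrium_def flip_empty by blast
qed

lemma cohesive_disjoint_Sa: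
  assumes "network W" "cohesive W h a R"
  shows "R \<subseteq> UNIV - Sa W a h"
proof
  fix i assume "i \<in> R"
  then have "wS W (UNIV - R) i + a * h i \<le> wS W R i"
    using assms(2) by (simp add: cohesive_def)
  moreover have "0 \<le> wS W (UNIV - R) i"
    using wS_mono[OF assms(1), of "{}" "UNIV - R" i] by (simp add: wS_def)
  ultimately show "i \<in> UNIV - Sa W a h"
    using wS_add_wS_compl[of W R i] by (simp add: Sa_def)
qed

lemma not_cohesive_iff:
  "\<not> cohesive W h a R \<longleftrightarrow> (\<exists>i\<in>R. wS W R i < wS W (UNIV - R) i + a * h i)"
  by (auto simp: cohesive_def not_le)

lemma not_cohesive_UNIV_iff: "\<not> cohesive W h a UNIV \<longleftrightarrow> (\<exists>i. wdeg W i < a * h i)"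
  by (auto simp: cohesive_def not_le wS_def wdeg_def)

theorem proposition5:
  fixes W :: "'v::finite \<Rightarrow> 'v \<Rightarrow> real" and h :: "'v \<Rightarrow> real" and a :: real
  assumes "network W"
    and "a = -1 \<or> a = 1"
  shows "unique_equilibrium W h (\<lambda>_. a) \<longleftrightarrow>
           ((\<exists>i. wdeg W i < a * h i) \<and>
            (\<forall>R. R \<noteq> {} \<and> R \<subseteq> UNIV - Sa W a h \<longrightarrow>
                 (\<exists>i\<in>R. wS W R i < wS W (UNIV - R) i + a * h i)))"
proof -
  have condition_b: "(\<forall>R. R \<noteq> {} \<and> R \<subseteq> UNIV - Sa W a h \<longrightarrow>
           (\<exists>i\<in>R. wS W R i < wS W (UNIV - R) i + a * h i))
        \<longleftrightarrow> (\<forall>R. R \<noteq> {} \<longrightarrow> \<not> cohesive W h a R)"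
    unfolding not_cohesive_iff[symmetric] using cohesive_disjoint_Sa[OF assms(1)] by metis
  have condition_a: "\<exists>i. wdeg W i < a * h i" if "\<forall>R. R \<noteq> {} \<longrightarrow> \<not> cohesive W h a R"
    using that not_cohesive_UNIV_iff by blast
  show ?thesis
    unfolding unique_equilibrium_iff_no_cohesive[OF assms] condition_b
    using condition_a by blast
qed

end
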